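(* Let $\mathcal A$ be finite, $r,\hat r:\mathcal A\to[0,1]$ with $r(a)\ge\hat r(a)$ for all $a\in\mathcal A$, $\eta>0$, and $\pi^{\mathrm{ref}}\in\Delta(\mathcal A)$ with $\pi^{\mathrm{ref}}(a)>0$ for all $a$. If $\hat\pi\in\arg\max_{\pi\in\Delta(\mathcal A)}J(\pi;\hat r)$, then $$\mathrm{SubOpt}(\hat\pi)=J(\pi^*;r)-J(\hat\pi;r)\le2\eta\sum_{a\in\mathcal A}\frac{\pi^*(a)^2}{\pi^{\mathrm{ref}}(a)}\big(r(a)-\hat r(a)\big)^2.$$
   Context: For $f:\mathcal A\to\mathbb R$, $J(\pi;f)=\sum_af(a)\pi(a)-\eta^{-1}\mathrm{KL}(\pi^{\mathrm{ref}}\|\pi)$, where $\mathrm{KL}(P\|Q)=\sum_aP(a)\log(P(a)/Q(a))$. $\pi^*$ denotes the (unique) maximizer of $J(\cdot;r)$ over $\Delta(\mathcal A)$. *)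

theory Defs
  imports "HOL-Analysis.Analysis"
begin

definition prob_simplex :: "'a set \<Rightarrow> ('a \<Rightarrow> real) set" where
  "prob_simplex A = {p. (\<forall>a\<in>A. 0 \<le> p a) \<and> sum p A = 1}"

definition KL :: "'a set \<Rightarrow> ('a \<Rightarrow> real) \<Rightarrow> ('a \<Rightarrow> real) \<Rightarrow> ereal" where
  "KL A P Q = (if \<exists>a\<in>A. P a > 0 \<and> Q a = 0 then \<infinity>
               else ereal (\<Sum>a\<in>{a\<in>A. P a > 0}. P a * ln (P a / Q a)))"

definition Jobj :: "'a set \<Rightarrow> real \<Rightarrow> ('a \<Rightarrow> real) \<Rightarrow> ('a \<Rightarrow> real) \<Rightarrow> ('a \<Rightarrow> real) \<Rightarrow> ereal" where
  "Jobj A \<eta> piref f p = ereal (\<Sum>a\<in>A. f a * p a) - KL A piref p / ereal \<eta>"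

definition is_maximizer :: "'a set \<Rightarrow> real \<Rightarrow> ('a \<Rightarrow> real) \<Rightarrow> ('a \<Rightarrow> real) \<Rightarrow> ('a \<Rightarrow> real) \<Rightarrow> bool" where
  "is_maximizer A \<eta> piref f p \<longleftrightarrow>
     p \<in> prob_simplex A \<and> (\<forall>q\<in>prob_simplex A. Jobj A \<eta> piref f q \<le> Jobj A \<eta> piref f p)"

end

theory Submission
  imports Defs
begin

(* A maximizer of J(.; f) is strictly positive, because KL(piref || p) is infinite as soon as p
   vanishes somewhere; so J is differentiable at pihat, and first-order optimality of pihat for rhat
   gives, for every q in the simplex, the variational inequality
     sum_a rhat a (q a - pihat a) + (1/eta) sum_a piref a (q a - pihat a) / pihat a <= 0.
   J(q; r) - J(pihat; r) is this quantity plus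
     sum_a [(r a - rhat a)(q a - pihat a) - (piref a / eta) phi (q a / pihat a)],
   with phi s = s - 1 - ln s.  With w = sqrt (q a / pihat a) one has phi (w^2) >= (w - 1)^2, and AM-GM
   bounds each bracket by eta (q a)^2 (r a - rhat a)^2 / piref a.  So the bound holds for every
   comparator q, with eta in place of 2 eta. *)

definition Jreal :: "'a set \<Rightarrow> real \<Rightarrow> ('a \<Rightarrow> real) \<Rightarrow> ('a \<Rightarrow> real) \<Rightarrow> ('a \<Rightarrow> real) \<Rightarrow> real" where
  "Jreal A \<eta> piref f p = (\<Sum>a\<in>A. f a * p a) - (\<Sum>a\<in>A. piref a * ln (piref a / p a)) / \<eta>"

lemma Jobj_eq_Jreal:
  assumes "\<eta> > 0" "\<forall>a\<in>A. piref a > 0" "\<forall>a\<in>A. p a > 0"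
  shows "Jobj A \<eta> piref f p = ereal (Jreal A \<eta> piref f p)"
proof -
  have "{a\<in>A. piref a > 0} = A"
    using assms by auto
  then show ?thesis
    using assms unfolding Jobj_def KL_def Jreal_def by auto
qed

lemma Jobj_eq_MInfty:
  assumes "\<eta> > 0" "a \<in> A" "piref a > 0" "p a = 0"
  shows "Jobj A \<eta> piref f p = -\<infinity>"
  using assms unfolding Jobj_def KL_def by auto

lemma prob_simplex_segment:
  assumes "p \<in> prob_simplex A" "q \<in> prob_simplex A" "0 \<le> t" "t \<le> 1"
  shows "(\<lambda>a. p a + t * (q a - p a)) \<in> prob_simplex A"
proof -
  have "p a + t * (q a - p a) = (1 - t) * p a + t * q a" for a
    by (simp add: algebra_simps)
  moreover have "sum (\<lambda>a. (1 - t) * p a + t * q a) A = 1"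
    using assms by (simp add: prob_simplex_def sum.distrib sum_distrib_left[symmetric])
  ultimately show ?thesis
    using assms by (auto simp: prob_simplex_def)
qed

lemma segment_pos:
  fixes x y t :: real
  assumes "x > 0" "y \<ge> 0" "0 \<le> t" "t < 1"
  shows "x + t * (y - x) > 0"
proof -
  have "x + t * (y - x) = (1 - t) * x + t * y"
    by (simp add: algebra_simps)
  then show ?thesis
    using assms by (simp add: add_pos_nonneg)
qed

lemma is_maximizer_pos:
  assumes "\<eta> > 0" "piref \<in> prob_simplex A" "\<forall>a\<in>A. piref a > 0" "is_maximizer A \<eta> piref f p"
    and "a \<in> A"
  shows "p a > 0"
proof -
  have "p a \<ge> 0" "Jobj A \<eta> piref f piref \<le> Jobj A \<eta> piref f p"
    using assms unfolding is_maximizer_def prob_simplex_def by auto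
  moreover have "Jobj A \<eta> piref f piref \<noteq> -\<infinity>"
    using Jobj_eq_Jreal[of \<eta> A piref piref f] assms by simp
  ultimately show ?thesis
    using Jobj_eq_MInfty[of \<eta> a A piref p f] assms by fastforce
qed

lemma DERIV_Jreal_segment:
  assumes "\<eta> > 0" "\<forall>a\<in>A. piref a > 0" "\<forall>a\<in>A. p a > 0"
  shows "((\<lambda>t. Jreal A \<eta> piref f (\<lambda>a. p a + t * (q a - p a))) has_real_derivative
           (\<Sum>a\<in>A. f a * (q a - p a)) + (\<Sum>a\<in>A. piref a * (q a - p a) / p a) / \<eta>) (at 0)"
proof -
  have "((\<lambda>t. f a * (p a + t * (q a - p a)) - piref a * ln (piref a / (p a + t * (q a - p a))) / \<eta>)
          has_real_derivative f a * (q a - p a) + piref a * (q a - p a) / p a / \<eta>) (at 0)"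
    if "a \<in> A" for a
  proof -
    have "p a > 0" "piref a > 0"
      using assms(2,3) that by auto
    with \<open>\<eta> > 0\<close> show ?thesis
      by (auto intro!: derivative_eq_intros)
  qed
  then have "((\<lambda>t. \<Sum>a\<in>A. f a * (p a + t * (q a - p a)) - piref a * ln (piref a / (p a + t * (q a - p a))) / \<eta>)
          has_real_derivative (\<Sum>a\<in>A. f a * (q a - p a) + piref a * (q a - p a) / p a / \<eta>)) (at 0)"
    by (rule DERIV_sum)
  then show ?thesis
    by (simp add: Jreal_def sum_subtractf sum_divide_distrib sum.distrib)
qed

lemma sq_sqrt_sub_one_le:
  fixes s :: real
  assumes "s > 0"
  shows "(sqrt s - 1)\<^sup>2 \<le> s - 1 - ln s"
proof -
  have "ln (sqrt s) \<le> sqrt s - 1"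
    using assms by (intro ln_le_minus_one) simp
  moreover have "ln s = 2 * ln (sqrt s)"
    using assms by (simp add: ln_sqrt)
  moreover have "(sqrt s - 1)\<^sup>2 = s - 2 * sqrt s + 1"
    using assms by (simp add: power2_diff)
  ultimately show ?thesis
    by linarith
qed

lemma mult_le_weighted_sq_add:
  fixes u v c :: real
  assumes "c > 0"
  shows "u * v \<le> c * u\<^sup>2 + v\<^sup>2 / (4 * c)"
proof -
  have "0 \<le> (2 * c * u - v)\<^sup>2 / (4 * c)"
    using assms by simp
  then show ?thesis
    using assms by (simp add: field_simps power2_eq_square)
qed

lemma gain_sub_divergence_le:
  fixes x y c D :: real
  assumes "x > 0" "y > 0" "c > 0" "D \<ge> 0"
  shows "D * (x - y) - c * (x / y - 1 - ln (x / y)) \<le> x\<^sup>2 * D\<^sup>2 / c"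
proof (cases "x \<le> y")
  case True
  have "ln (x / y) \<le> x / y - 1"
    using assms by (intro ln_le_minus_one) simp
  then have "c * (x / y - 1 - ln (x / y)) \<ge> 0"
    using assms by simp
  moreover have "D * (x - y) \<le> 0"
    using True assms by (simp add: mult_nonneg_nonpos)
  moreover have "x\<^sup>2 * D\<^sup>2 / c \<ge> 0"
    using assms by simp
  ultimately show ?thesis
    by linarith
next
  case False
  define a b where "a = sqrt x" and "b = sqrt y"
  have ab: "a > 0" "b > 0" "b < a" "x = a\<^sup>2" "y = b\<^sup>2"
    using assms False by (auto simp: a_def b_def)
  define u v where "u = sqrt (x / y) - 1" and "v = D * (a + b) * b"
  have u_le: "c * u\<^sup>2 \<le> c * (x / y - 1 - ln (x / y))"
    using assms sq_sqrt_sub_one_le[of "x / y"] by (simp add: u_def)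
  have "(a + b) * b \<le> (a + a) * a"
    using ab by (intro mult_mono) auto
  then have "((a + b) * b)\<^sup>2 \<le> (2 * a\<^sup>2)\<^sup>2"
    using ab by (intro power_mono) (auto simp: power2_eq_square)
  then have "D\<^sup>2 * ((a + b) * b)\<^sup>2 / (4 * c) \<le> D\<^sup>2 * (2 * a\<^sup>2)\<^sup>2 / (4 * c)"
    using assms by (intro divide_right_mono mult_left_mono) auto
  then have v_le: "v\<^sup>2 / (4 * c) \<le> x\<^sup>2 * D\<^sup>2 / c"
    using ab assms by (simp add: v_def power_mult_distrib field_simps power2_eq_square)
  have "sqrt (x / y) = a / b"
    by (simp add: a_def b_def real_sqrt_divide)
  then have "D * (x - y) = u * v"
    using ab by (simp add: u_def v_def field_simps power2_eq_square)
  also have "\<dots> \<le> c * u\<^sup>2 + v\<^sup>2 / (4 * c)"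
    using \<open>c > 0\<close> by (rule mult_le_weighted_sq_add)
  finally show ?thesis
    using u_le v_le by linarith
qed

lemma is_maximizer_variational_ineq:
  assumes "\<eta> > 0" "\<forall>a\<in>A. piref a > 0" "is_maximizer A \<eta> piref f p" "\<forall>a\<in>A. p a > 0"
    and "q \<in> prob_simplex A"
  shows "(\<Sum>a\<in>A. f a * (q a - p a)) + (\<Sum>a\<in>A. piref a * (q a - p a) / p a) / \<eta> \<le> 0"
    (is "?S \<le> 0")
proof (rule ccontr)
  have p: "p \<in> prob_simplex A"
    using assms(3) unfolding is_maximizer_def by simp
  have p_max: "Jobj A \<eta> piref f q' \<le> Jobj A \<eta> piref f p" if "q' \<in> prob_simplex A" for q'
    using assms(3) that unfolding is_maximizer_def by simp
  define g where "g t = Jreal A \<eta> piref f (\<lambda>a. p a + t * (q a - p a))" for t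
  assume "\<not> ?S \<le> 0"
  then have "?S > 0"
    by linarith
  moreover have "(g has_real_derivative ?S) (at 0)"
    unfolding g_def using assms(1,2,4) by (rule DERIV_Jreal_segment)
  ultimately have "\<exists>d > 0. \<forall>h > 0. h < d \<longrightarrow> g 0 < g (0 + h)"
    by (intro DERIV_pos_inc_right)
  then obtain d where "d > 0" and g_inc: "\<And>h. 0 < h \<Longrightarrow> h < d \<Longrightarrow> g 0 < g h"
    by auto
  define h where "h = min (d / 2) (1 / 2)"
  have h: "0 < h" "h < d" "h < 1"
    using \<open>d > 0\<close> by (auto simp: h_def)
  let ?ph = "\<lambda>a. p a + h * (q a - p a)"
  have "?ph \<in> prob_simplex A"
    using p assms(5) h by (intro prob_simplex_segment) auto
  then have "Jobj A \<eta> piref f ?ph \<le> Jobj A \<eta> piref f p"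
    by (rule p_max)
  moreover have "\<forall>a\<in>A. ?ph a > 0"
  proof
    fix a
    assume "a \<in> A"
    then have "p a > 0" "q a \<ge> 0"
      using assms(4,5) by (auto simp: prob_simplex_def)
    with h show "?ph a > 0"
      by (intro segment_pos) auto
  qed
  ultimately have "Jreal A \<eta> piref f ?ph \<le> Jreal A \<eta> piref f p"
    using Jobj_eq_Jreal[OF assms(1,2)] assms(4) by simp
  then have "g h \<le> g 0"
    by (simp add: g_def)
  moreover have "g 0 < g h"
    using g_inc h(1,2) .
  ultimately show False
    by linarith
qed

lemma Jreal_diff_eq:
  assumes "\<eta> > 0" "\<forall>a\<in>A. piref a > 0" "\<forall>a\<in>A. p a > 0" "\<forall>a\<in>A. q a > 0"
  shows "Jreal A \<eta> piref g q - Jreal A \<eta> piref g p =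
           ((\<Sum>a\<in>A. f a * (q a - p a)) + (\<Sum>a\<in>A. piref a * (q a - p a) / p a) / \<eta>)
         + (\<Sum>a\<in>A. (g a - f a) * (q a - p a) - piref a / \<eta> * (q a / p a - 1 - ln (q a / p a)))"
proof -
  have term_eq: "g a * q a - g a * p a - (piref a * ln (piref a / q a) - piref a * ln (piref a / p a)) / \<eta>
      = f a * (q a - p a) + piref a * (q a - p a) / p a / \<eta>
        + ((g a - f a) * (q a - p a) - piref a / \<eta> * (q a / p a - 1 - ln (q a / p a)))"
    if "a \<in> A" for a
  proof -
    have pos: "piref a > 0" "p a > 0" "q a > 0"
      using assms(2-4) that by auto
    then have ln_diff: "piref a * ln (piref a / q a) - piref a * ln (piref a / p a) = - (piref a * ln (q a / p a))"
      by (simp add: ln_div algebra_simps)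
    show ?thesis
      unfolding ln_diff using pos \<open>\<eta> > 0\<close> by (simp add: field_simps)
  qed
  have "Jreal A \<eta> piref g q - Jreal A \<eta> piref g p
      = (\<Sum>a\<in>A. g a * q a - g a * p a - (piref a * ln (piref a / q a) - piref a * ln (piref a / p a)) / \<eta>)"
    by (simp add: Jreal_def sum_subtractf diff_divide_distrib sum_divide_distrib)
  also have "\<dots> = (\<Sum>a\<in>A. f a * (q a - p a) + piref a * (q a - p a) / p a / \<eta>
           + ((g a - f a) * (q a - p a) - piref a / \<eta> * (q a / p a - 1 - ln (q a / p a))))"
    using term_eq by (rule sum.cong[OF refl])
  finally show ?thesis
    by (simp add: sum.distrib sum_divide_distrib)
qed

lemma Jobj_sub_maximizer_le:
  assumes "\<eta> > 0" "piref \<in> prob_simplex A" "\<forall>a\<in>A. piref a > 0" "\<forall>a\<in>A. f a \<le> g a"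
    and "is_maximizer A \<eta> piref f p" "q \<in> prob_simplex A"
  shows "Jobj A \<eta> piref g q - Jobj A \<eta> piref g p
           \<le> ereal (\<eta> * (\<Sum>a\<in>A. (q a)\<^sup>2 / piref a * (g a - f a)\<^sup>2))"
proof -
  have p_pos: "\<forall>a\<in>A. p a > 0"
    using is_maximizer_pos[OF assms(1,2,3,5)] by blast
  show ?thesis
  proof (cases "\<forall>a\<in>A. q a > 0")
    case False
    then obtain a where "a \<in> A" "q a = 0"
      using assms(6) by (force simp: prob_simplex_def)
    then have "Jobj A \<eta> piref g q = -\<infinity>"
      using assms(1,3) by (intro Jobj_eq_MInfty) auto
    then show ?thesis
      using Jobj_eq_Jreal[OF assms(1,3) p_pos] by simp
  next
    case True
    have "Jreal A \<eta> piref g q - Jreal A \<eta> piref g p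
        \<le> (\<Sum>a\<in>A. (g a - f a) * (q a - p a) - piref a / \<eta> * (q a / p a - 1 - ln (q a / p a)))"
      using Jreal_diff_eq[OF assms(1,3) p_pos True, of g f]
        is_maximizer_variational_ineq[OF assms(1,3,5) p_pos assms(6)] by linarith
    also have "\<dots> \<le> (\<Sum>a\<in>A. \<eta> * ((q a)\<^sup>2 / piref a * (g a - f a)\<^sup>2))"
    proof (rule sum_mono)
      fix a
      assume "a \<in> A"
      then have "q a > 0" "p a > 0" "piref a / \<eta> > 0" "g a - f a \<ge> 0"
        using True p_pos assms(1,3,4) by auto
      then have "(g a - f a) * (q a - p a) - piref a / \<eta> * (q a / p a - 1 - ln (q a / p a))
          \<le> (q a)\<^sup>2 * (g a - f a)\<^sup>2 / (piref a / \<eta>)"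
        by (rule gain_sub_divergence_le)
      then show "(g a - f a) * (q a - p a) - piref a / \<eta> * (q a / p a - 1 - ln (q a / p a))
          \<le> \<eta> * ((q a)\<^sup>2 / piref a * (g a - f a)\<^sup>2)"
        by (simp add: field_simps)
    qed
    also have "\<dots> = \<eta> * (\<Sum>a\<in>A. (q a)\<^sup>2 / piref a * (g a - f a)\<^sup>2)"
      by (simp add: sum_distrib_left)
    finally show ?thesis
      using Jobj_eq_Jreal[OF assms(1,3) p_pos] Jobj_eq_Jreal[OF assms(1,3) True] by simp
  qed
qed

theorem lemma5p5:
  fixes A :: "'a set" and r rhat piref pistar pihat :: "'a \<Rightarrow> real" and \<eta> :: real
  assumes "finite A"
    and "\<forall>a\<in>A. 0 \<le> r a \<and> r a \<le> 1"
    and "\<forall>a\<in>A. 0 \<le> rhat a \<and> rhat a \<le> 1"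
    and "\<forall>a\<in>A. rhat a \<le> r a"
    and "\<eta> > 0"
    and "piref \<in> prob_simplex A" and "\<forall>a\<in>A. piref a > 0"
    and "is_maximizer A \<eta> piref r pistar"
    and "is_maximizer A \<eta> piref rhat pihat"
  shows "Jobj A \<eta> piref r pistar - Jobj A \<eta> piref r pihat
         \<le> ereal (2 * \<eta> * (\<Sum>a\<in>A. (pistar a)\<^sup>2 / piref a * (r a - rhat a)\<^sup>2))"
proof -
  let ?S = "\<Sum>a\<in>A. (pistar a)\<^sup>2 / piref a * (r a - rhat a)\<^sup>2"
  have S_nonneg: "?S \<ge> 0"
    using assms(7) by (intro sum_nonneg) auto
  have "pistar \<in> prob_simplex A"
    using assms(8) by (simp add: is_maximizer_def)
  then have "Jobj A \<eta> piref r pistar - Jobj A \<eta> piref r pihat \<le> ereal (\<eta> * ?S)"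
    using assms(4-7,9) by (intro Jobj_sub_maximizer_le) auto
  also have "\<dots> \<le> ereal (2 * \<eta> * ?S)"
    using S_nonneg assms(5) by simp
  finally show ?thesis .
qed

end
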